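(* Let $\mathcal{L}$ be a language with semantic structure $\mathcal{S}=(\Sigma,I)$, with atom interpretations $\mathbf{AP}_{\mathcal{L}}=\{\mathbf{p}\mid p\in AP_{\mathcal{L}}\}$ and operator interpretations $\mathbf{Op}_{\mathcal{L}}=\{\mathbf{f}\mid f\in Op_{\mathcal{L}}\}$. If $\mathcal{L}$ is closed under infinite logical conjunction, then $\mathrm{AD}_{\mathcal{L}}=\mathcal{S}_{\mathbf{AP}_{\mathcal{L}}\cup\mathbf{Op}_{\mathcal{L}}}(\{\Sigma\})$, where each $\mathbf{p}$ is regarded as a $0$-ary function (a constant) and $\{\Sigma\}$ denotes the most abstract domain (the closure mapping every subset to $\Sigma$).
   Context: A language $\mathcal{L}$ has formulae $\varphi::=p\mid f(\varphi_1,\dots,\varphi_n)$, $p\in AP_{\mathcal{L}}$, $f\in Op_{\mathcal{L}}$ of arity $\ge1$; $\mathcal{S}=(\Sigma,I)$ gives $\mathbf{p}=I(p)\subseteq\Sigma$, $\mathbf{f}=I(f):\wp(\Sigma)^n\to\wp(\Sigma)$ and the compositional semantics $[\![\varphi]\!]_{\mathcal{S}}$. Closed under infinite logical conjunction: for every $\Phi\subseteq\mathcal{L}$ (including $\varnothing$) some $\psi$ has $[\![\psi]\!]_{\mathcal{S}}=\bigcap_{\varphi\in\Phi}[\![\varphi]\!]_{\mathcal{S}}$. $\mathrm{AD}_{\mathcal{L}}$ is the upper closure operator on $\wp(\Sigma)$ whose image is the set of intersections of subfamilies of $\{[\![\varphi]\!]_{\mathcal{S}}\}$. Abstract domains of $\wp(\Sigma)$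 are identified with upper closure operators and ordered pointwise. A closure $\rho$ is forward complete for $f$ of arity $n\ge1$ if $f(\rho(X_1),..,\rho(X_n))=\rho(f(\rho(X_1),..,\rho(X_n)))$, and for a constant $k\subseteq\Sigma$ if $\rho(k)=k$. For a set $F$ of such functions and a closure $\mu$, $\mathcal{S}_F(\mu)$ is the most abstract closure $\rho\sqsubseteq\mu$ that is forward complete for all $f\in F$. *)

theory Defs
  imports Main
begin

datatype ('p, 'f) form = Atom 'p | App 'f "('p, 'f) form list"

inductive wf_form :: "'p set \<Rightarrow> 'f set \<Rightarrow> ('f \<Rightarrow> nat) \<Rightarrow> ('p, 'f) form \<Rightarrow> bool"
  for AP Op ar where
  wf_Atom: "p \<in> AP \<Longrightarrow> wf_form AP Op ar (Atom p)"
| wf_App: "f \<in> Op \<Longrightarrow> length xs = ar f \<Longrightarrow> (\<forall>x\<in>set xs. wf_form AP Op ar x)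
           \<Longrightarrow> wf_form AP Op ar (App f xs)"

text \<open>Compositional semantics; the state space Sigma is the universe of type 'a.
  IP p is the interpretation of atom p, IF f that of operator f (applied to a
  list of arguments of length ar f).\<close>
fun sem :: "('p \<Rightarrow> 'a set) \<Rightarrow> ('f \<Rightarrow> 'a set list \<Rightarrow> 'a set) \<Rightarrow> ('p, 'f) form \<Rightarrow> 'a set" where
  "sem IP IF (Atom p) = IP p"
| "sem IP IF (App f xs) = IF f (map (sem IP IF) xs)"

definition closed_inf_conj ::
  "'p set \<Rightarrow> 'f set \<Rightarrow> ('f \<Rightarrow> nat) \<Rightarrow> ('p \<Rightarrow> 'a set) \<Rightarrow> ('f \<Rightarrow> 'a set list \<Rightarrow> 'a set) \<Rightarrow> bool" where
  "closed_inf_conj AP Op ar IP IF \<longleftrightarrow>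
     (\<forall>\<Phi>. \<Phi> \<subseteq> {\<phi>. wf_form AP Op ar \<phi>} \<longrightarrow>
        (\<exists>\<psi>. wf_form AP Op ar \<psi> \<and> sem IP IF \<psi> = (\<Inter>\<phi>\<in>\<Phi>. sem IP IF \<phi>)))"

text \<open>Abstract domains are ordered pointwise by the function order: rho \<le> mu iff
  rho X \<subseteq> mu X for all X (rho more precise / more concrete).\<close>
definition uco :: "('a set \<Rightarrow> 'a set) \<Rightarrow> bool" where
  "uco \<rho> \<longleftrightarrow> mono \<rho> \<and> (\<forall>X. X \<subseteq> \<rho> X) \<and> (\<forall>X. \<rho> (\<rho> X) = \<rho> X)"

definition AD ::
  "'p set \<Rightarrow> 'f set \<Rightarrow> ('f \<Rightarrow> nat) \<Rightarrow> ('p \<Rightarrow> 'a set) \<Rightarrow> ('f \<Rightarrow> 'a set list \<Rightarrow> 'a set) \<Rightarrow> 'a set \<Rightarrow> 'a set" where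
  "AD AP Op ar IP IF X = \<Inter>{sem IP IF \<phi> | \<phi>. wf_form AP Op ar \<phi> \<and> X \<subseteq> sem IP IF \<phi>}"

text \<open>Semantic functions: constants (0-ary) and n-ary functions on \<wp>(Sigma).\<close>
datatype 'a sfun = Cst "'a set" | Fn nat "'a set list \<Rightarrow> 'a set"

fun fwd_complete :: "('a set \<Rightarrow> 'a set) \<Rightarrow> 'a sfun \<Rightarrow> bool" where
  "fwd_complete \<rho> (Cst k) \<longleftrightarrow> \<rho> k = k"
| "fwd_complete \<rho> (Fn n f) \<longleftrightarrow>
     (\<forall>Xs. length Xs = n \<longrightarrow> f (map \<rho> Xs) = \<rho> (f (map \<rho> Xs)))"

definition shell :: "'a sfun set \<Rightarrow> ('a set \<Rightarrow> 'a set) \<Rightarrow> ('a set \<Rightarrow> 'a set)" where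
  "shell F \<mu> = (GREATEST \<rho>. uco \<rho> \<and> \<rho> \<le> \<mu> \<and> (\<forall>g\<in>F. fwd_complete \<rho> g))"

definition top_dom :: "'a set \<Rightarrow> 'a set" where
  "top_dom X = UNIV"

end

theory Submission
  imports Defs
begin

(* Both sides are characterised through the denotations of formulae. A closure that is
   forward complete for the atoms and operators fixes every denotation (induction on
   formulae), so by monotonicity it lies below AD_L, whose image consists of intersections
   of denotations. Conversely, closure under infinite conjunction makes every AD_L(X) the
   denotation of a single formula; an operator applied to such values is again a
   denotation, hence fixed by AD_L. So AD_L is itself forward complete, and is therefore
   the most abstract such closure. *)

abbreviation lang_sfuns ::
  "'p set \<Rightarrow> 'f set \<Rightarrow> ('f \<Rightarrow> nat) \<Rightarrow> ('p \<Rightarrow> 'a set) \<Rightarrow> ('f \<Rightarrow> 'a set list \<Rightarrow> 'a set) \<Rightarrow> 'a sfun set"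
  where "lang_sfuns AP Op ar IP IF \<equiv> (\<lambda>p. Cst (IP p)) ` AP \<union> (\<lambda>f. Fn (ar f) (IF f)) ` Op"

lemma shell_eqI:
  assumes "uco \<rho>" and "\<rho> \<le> \<mu>" and "\<forall>g\<in>F. fwd_complete \<rho> g"
    and "\<And>\<sigma>. uco \<sigma> \<Longrightarrow> \<sigma> \<le> \<mu> \<Longrightarrow> \<forall>g\<in>F. fwd_complete \<sigma> g \<Longrightarrow> \<sigma> \<le> \<rho>"
  shows "shell F \<mu> = \<rho>"
  unfolding shell_def by (rule Greatest_equality) (use assms in auto)

lemma le_top_dom: "\<rho> \<le> top_dom"
  unfolding top_dom_def le_fun_def by blast

lemma uco_AD: "uco (AD AP Op ar IP IF)"
  unfolding uco_def AD_def mono_def by blast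

lemma AD_sem_eq: "wf_form AP Op ar \<phi> \<Longrightarrow> AD AP Op ar IP IF (sem IP IF \<phi>) = sem IP IF \<phi>"
  unfolding AD_def by blast

lemma le_AD_if_fixes_sem:
  assumes "mono \<rho>" and "\<And>\<phi>. wf_form AP Op ar \<phi> \<Longrightarrow> \<rho> (sem IP IF \<phi>) = sem IP IF \<phi>"
  shows "\<rho> \<le> AD AP Op ar IP IF"
proof (rule le_funI)
  fix X
  have "\<rho> X \<subseteq> sem IP IF \<phi>" if "wf_form AP Op ar \<phi>" and "X \<subseteq> sem IP IF \<phi>" for \<phi>
    using monoD[OF assms(1) that(2)] assms(2)[OF that(1)] by simp
  then show "\<rho> X \<le> AD AP Op ar IP IF X"
    unfolding AD_def by blast
qed

lemma AD_eq_sem: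
  assumes "closed_inf_conj AP Op ar IP IF"
  shows "\<exists>\<psi>. wf_form AP Op ar \<psi> \<and> sem IP IF \<psi> = AD AP Op ar IP IF X"
proof -
  let ?\<Phi> = "{\<phi>. wf_form AP Op ar \<phi> \<and> X \<subseteq> sem IP IF \<phi>}"
  have "?\<Phi> \<subseteq> {\<phi>. wf_form AP Op ar \<phi>}"
    by blast
  then obtain \<psi> where "wf_form AP Op ar \<psi>" and "sem IP IF \<psi> = (\<Inter>\<phi>\<in>?\<Phi>. sem IP IF \<phi>)"
    using assms unfolding closed_inf_conj_def by blast
  then show ?thesis
    unfolding AD_def by blast
qed

lemma fwd_complete_fixes_sem:
  assumes "\<forall>g\<in>lang_sfuns AP Op ar IP IF. fwd_complete \<rho> g"
  shows "wf_form AP Op ar \<phi> \<Longrightarrow> \<rho> (sem IP IF \<phi>) = sem IP IF \<phi>"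
proof (induction rule: wf_form.induct)
  case (wf_Atom p)
  then have "fwd_complete \<rho> (Cst (IP p))"
    using assms by blast
  then show ?case
    by simp
next
  case (wf_App f xs)
  then have "fwd_complete \<rho> (Fn (ar f) (IF f))"
    using assms by blast
  then have "IF f (map \<rho> (map (sem IP IF) xs)) = \<rho> (IF f (map \<rho> (map (sem IP IF) xs)))"
    using wf_App.hyps(2) by (simp del: map_map)
  moreover have "map \<rho> (map (sem IP IF) xs) = map (sem IP IF) xs"
    using wf_App.IH by (induction xs) auto
  ultimately show ?case
    by (simp del: map_map)
qed

lemma fwd_complete_AD:
  assumes "closed_inf_conj AP Op ar IP IF"
  shows "\<forall>g\<in>lang_sfuns AP Op ar IP IF. fwd_complete (AD AP Op ar IP IF) g"
proof -
  let ?A = "AD AP Op ar IP IF"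
  have "\<forall>X. \<exists>\<psi>. wf_form AP Op ar \<psi> \<and> sem IP IF \<psi> = ?A X"
    using AD_eq_sem[OF assms] by blast
  from choice[OF this] obtain r where r: "\<forall>X. wf_form AP Op ar (r X) \<and> sem IP IF (r X) = ?A X"
    by blast
  have operators: "IF f (map ?A Xs) = ?A (IF f (map ?A Xs))" if "f \<in> Op" and "length Xs = ar f" for f Xs
  proof -
    have "IF f (map ?A Xs) = sem IP IF (App f (map r Xs))"
      using r by (simp add: comp_def)
    moreover have "wf_form AP Op ar (App f (map r Xs))"
      using that r by (intro wf_App) auto
    ultimately show ?thesis
      by (simp only: AD_sem_eq)
  qed
  have atoms: "?A (IP p) = IP p" if "p \<in> AP" for p
    using AD_sem_eq[OF wf_Atom[OF that]] by simp
  show ?thesis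
    using atoms operators by fastforce
qed

theorem corollary6p6:
  fixes AP :: "'p set" and Op :: "'f set" and ar :: "'f \<Rightarrow> nat"
    and IP :: "'p \<Rightarrow> 'a set" and IF :: "'f \<Rightarrow> 'a set list \<Rightarrow> 'a set"
  assumes "\<forall>f\<in>Op. ar f \<ge> 1"
    and "closed_inf_conj AP Op ar IP IF"
  shows "AD AP Op ar IP IF =
         shell ((\<lambda>p. Cst (IP p)) ` AP \<union> (\<lambda>f. Fn (ar f) (IF f)) ` Op) top_dom"
proof (rule sym, rule shell_eqI)
  show "uco (AD AP Op ar IP IF)"
    by (rule uco_AD)
  show "AD AP Op ar IP IF \<le> top_dom"
    by (rule le_top_dom)
  show "\<forall>g\<in>lang_sfuns AP Op ar IP IF. fwd_complete (AD AP Op ar IP IF) g"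
    using assms(2) by (rule fwd_complete_AD)
next
  fix \<sigma> :: "'a set \<Rightarrow> 'a set"
  assume "uco \<sigma>" and fwd: "\<forall>g\<in>lang_sfuns AP Op ar IP IF. fwd_complete \<sigma> g"
  show "\<sigma> \<le> AD AP Op ar IP IF"
  proof (rule le_AD_if_fixes_sem)
    show "mono \<sigma>"
      using \<open>uco \<sigma>\<close> unfolding uco_def by blast
    show "\<sigma> (sem IP IF \<phi>) = sem IP IF \<phi>" if "wf_form AP Op ar \<phi>" for \<phi>
      using fwd that by (rule fwd_complete_fixes_sem)
  qed
qed

end
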